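(* For every $\delta>0$ there exist $n\ge1$, a pool $\mathcal D=\{(p_i,t_i)\}_{i=1}^n$ with $p_i\in[0,1]$, $t_i>0$, and a budget $T>0$, such that the greedy forward selection strategy (defined in the context) outputs an ensemble $S$ with majority-voting accuracy $q(S)\le 1/2+\delta$, while there is an index set $\mathcal L\subseteq\{1,\dots,n\}$ with $\sum_{i\in\mathcal L}t_i\le T$ and $q(\mathcal L)\ge 1-\delta$. In other words, the difference between the optimal constrained ensemble accuracy and the accuracy produced by greedy forward selection can be arbitrarily close to $1/2$.
   Context: A pool consists of candidate members $i=1,\dots,n$, each with accuracy $p_i\in[0,1]$ and cost $t_i>0$; a budget $T>0$ is given. For a nonempty index set $\mathcal L$ with $|\mathcal L|=\ell$, the (majority voting) accuracy is $q(\mathcal L)=\sum_{k=\lfloor \ell/2\rfloor+1}^{\ell}\sum_{\mathcal I\subseteq\mathcal L,|\mathcal I|=k}\prod_{i\in\mathcal I}p_i\prod_{j\in\mathcal L\setminus\mathcal I}(1-p_j)$. An index set $\mathcal L$ is feasible if $\sum_{i\in\mathcal L}t_i\le T$. Greedy forward selection: start with $S$ consisting of a single member of maximal accuracy $p_i$; then repeatedly, among the members $j\notin S$ with $\sum_{i\in S}t_i+t_j\le T$, take one maximizing $q(S\cup\{j\})$; if this value is strictly larger than $q(S)$, add $j$ to $S$ and continue, otherwise (or if no such $j$ exists) stop and output $S$. *)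

theory Defs
  imports Complex_Main
begin

definition mv_acc :: "(nat \<Rightarrow> real) \<Rightarrow> nat set \<Rightarrow> real" where
  "mv_acc p L = (\<Sum>I\<in>{I. I \<subseteq> L \<and> card L div 2 + 1 \<le> card I}.
                   (\<Prod>i\<in>I. p i) * (\<Prod>j\<in>L - I. 1 - p j))"

definition candidates :: "nat \<Rightarrow> (nat \<Rightarrow> real) \<Rightarrow> real \<Rightarrow> nat set \<Rightarrow> nat set" where
  "candidates n t T S = {j \<in> {1..n}. j \<notin> S \<and> sum t S + t j \<le> T}"

text \<open>States reachable by (any tie-breaking of) greedy forward selection.\<close>
inductive greedy_reach :: "nat \<Rightarrow> (nat \<Rightarrow> real) \<Rightarrow> (nat \<Rightarrow> real) \<Rightarrow> real \<Rightarrow> nat set \<Rightarrow> bool"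
  for n p t T where
  start: "\<lbrakk> i \<in> {1..n}; \<forall>k\<in>{1..n}. p k \<le> p i \<rbrakk> \<Longrightarrow> greedy_reach n p t T {i}"
| step: "\<lbrakk> greedy_reach n p t T S; j \<in> candidates n t T S;
           \<forall>k\<in>candidates n t T S. mv_acc p (insert k S) \<le> mv_acc p (insert j S);
           mv_acc p (insert j S) > mv_acc p S \<rbrakk>
         \<Longrightarrow> greedy_reach n p t T (insert j S)"

definition greedy_output :: "nat \<Rightarrow> (nat \<Rightarrow> real) \<Rightarrow> (nat \<Rightarrow> real) \<Rightarrow> real \<Rightarrow> nat set \<Rightarrow> bool" where
  "greedy_output n p t T S \<longleftrightarrow> greedy_reach n p t T S \<and>
     (\<forall>j\<in>candidates n t T S. mv_acc p (insert j S) \<le> mv_acc p S)"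

end

theory Submission
  imports Defs
begin

text \<open>Two majority voters are correct only if both are, so adding a second member to a
  single one never raises the accuracy: greedy forward selection stops at a single most
  accurate member. In a pool of \<open>2r+1\<close> members of accuracy \<open>P = 1/2 + e\<close>, on the other
  hand, each of the at most \<open>2\<^bsup>2r+1\<^esup>\<close> minority outcomes has probability at most
  \<open>(P(1-P))\<^sup>r\<close>, so the whole pool errs with probability at most \<open>2(1 - 4e\<^sup>2)\<^sup>r\<close>.\<close>

definition vote_prob :: "(nat \<Rightarrow> real) \<Rightarrow> nat set \<Rightarrow> nat set \<Rightarrow> real" where
  "vote_prob p L I = (\<Prod>i\<in>I. p i) * (\<Prod>j\<in>L - I. 1 - p j)"

lemma mv_acc_eq_sum_vote_prob:
  "mv_acc p L = (\<Sum>I | I \<subseteq> L \<and> card L div 2 + 1 \<le> card I. vote_prob p L I)"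
  by (simp add: mv_acc_def vote_prob_def)

lemma sum_vote_prob_Pow: "finite L \<Longrightarrow> (\<Sum>I\<in>Pow L. vote_prob p L I) = 1"
  using prod_add[of L p "\<lambda>i. 1 - p i"] by (simp add: vote_prob_def)

lemma one_minus_mv_acc:
  assumes "finite L"
  shows "1 - mv_acc p L = (\<Sum>I | I \<subseteq> L \<and> card I \<le> card L div 2. vote_prob p L I)"
proof -
  let ?maj = "{I. I \<subseteq> L \<and> card L div 2 + 1 \<le> card I}"
  have minority: "{I. I \<subseteq> L \<and> card I \<le> card L div 2} = Pow L - ?maj" by auto
  have "(\<Sum>I\<in>Pow L. vote_prob p L I) = (\<Sum>I\<in>Pow L - ?maj. vote_prob p L I) + mv_acc p L"
    using sum.subset_diff[of ?maj "Pow L"] assms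
    by (auto simp: mv_acc_eq_sum_vote_prob)
  then show ?thesis
    using sum_vote_prob_Pow[OF assms] by (simp add: minority)
qed

lemma mv_acc_singleton: "mv_acc p {i} = p i"
proof -
  have "{I. I \<subseteq> {i} \<and> card {i} div 2 + 1 \<le> card I} = {{i}}"
    by (auto simp: subset_singleton_iff)
  then show ?thesis by (simp add: mv_acc_def)
qed

lemma mv_acc_doubleton:
  assumes "i \<noteq> j"
  shows "mv_acc p {i, j} = p i * p j"
proof -
  have "card {i, j} = 2" using assms by simp
  then have "I \<subseteq> {i, j} \<and> card {i, j} div 2 + 1 \<le> card I \<longleftrightarrow> I = {i, j}" for I
    using card_seteq[of "{i, j}" I] by auto
  then have "{I. I \<subseteq> {i, j} \<and> card {i, j} div 2 + 1 \<le> card I} = {{i, j}}"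
    by blast
  then show ?thesis using assms by (simp add: mv_acc_def)
qed

lemma vote_prob_minority_le:
  fixes P :: real
  assumes fin: "finite L" and card_L: "card L = 2*r + 1" and hom: "\<forall>i\<in>L. p i = P"
    and P: "1/2 \<le> P" "P \<le> 1" and I: "I \<subseteq> L" "card I \<le> r"
  shows "vote_prob p L I \<le> (P * (1 - P))^r"
proof -
  define Q where "Q = 1 - P"
  define d where "d = r - card I"
  have Q: "0 \<le> Q" "Q \<le> P" "Q \<le> 1" using P by (auto simp: Q_def)
  have "card (L - I) = card I + 2*d + 1"
    using card_Diff_subset[OF finite_subset[OF I(1) fin] I(1)] card_L I(2) by (simp add: d_def)
  then have "vote_prob p L I = P ^ card I * Q ^ (card I + 2*d + 1)"
    using hom I(1) by (simp add: vote_prob_def Q_def subset_iff)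
  also have "\<dots> = (P*Q) ^ card I * ((Q*Q)^d * Q)"
    by (simp add: power_add power_mult_distrib power_mult power2_eq_square)
  also have "\<dots> \<le> (P*Q) ^ card I * ((P*Q)^d * 1)"
    using Q by (intro mult_left_mono mult_mono power_mono mult_right_mono) auto
  also have "\<dots> = (P*Q)^r"
    using I(2) by (simp add: d_def power_add[symmetric])
  finally show ?thesis by (simp add: Q_def)
qed

lemma mv_acc_homogeneous_ge:
  fixes P :: real
  assumes fin: "finite L" and card_L: "card L = 2*r + 1" and hom: "\<forall>i\<in>L. p i = P"
    and P: "1/2 \<le> P" "P \<le> 1"
  shows "1 - 2 * (4 * P * (1 - P))^r \<le> mv_acc p L"
proof -
  let ?minority = "{I. I \<subseteq> L \<and> card I \<le> card L div 2}"
  have "card ?minority \<le> card (Pow L)"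
    using fin by (intro card_mono) auto
  then have "card ?minority \<le> 2 ^ (2*r + 1)"
    using fin card_L by (simp add: card_Pow)
  then have card_minority: "real (card ?minority) \<le> 2 ^ (2*r + 1)"
    by (metis of_nat_le_iff of_nat_numeral of_nat_power)
  have "1 - mv_acc p L = (\<Sum>I\<in>?minority. vote_prob p L I)"
    by (rule one_minus_mv_acc[OF fin])
  also have "\<dots> \<le> (\<Sum>I\<in>?minority. (P * (1 - P))^r)"
    by (intro sum_mono vote_prob_minority_le[OF fin card_L hom P]) (auto simp: card_L)
  also have "\<dots> \<le> 2 ^ (2*r + 1) * (P * (1 - P))^r"
    using card_minority P by (simp add: mult_right_mono)
  also have "\<dots> = 2 * (4 * P * (1 - P))^r"
    by (simp add: power_mult power_mult_distrib)
  finally show ?thesis by simp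
qed

lemma ex_majority_error_bound_less:
  fixes P \<epsilon> :: real
  assumes "1/2 < P" "P \<le> 1" "\<epsilon> > 0"
  shows "\<exists>r. 2 * (4 * P * (1 - P))^r < \<epsilon>"
proof -
  have "4 * P * (1 - P) = 1 - (2*P - 1)\<^sup>2"
    by (simp add: algebra_simps power2_eq_square)
  moreover have "(2*P - 1)\<^sup>2 > 0" "(2*P - 1)\<^sup>2 \<le> 1"
    using assms by (auto intro: power_le_one)
  ultimately have "4 * P * (1 - P) < 1" "0 \<le> 4 * P * (1 - P)"
    using assms by auto
  then obtain r where "(4 * P * (1 - P))^r < \<epsilon>/2"
    using real_arch_pow_inv[of "\<epsilon>/2"] assms by fastforce
  then have "2 * (4 * P * (1 - P))^r < \<epsilon>" by simp
  then show ?thesis ..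
qed

lemma greedy_reach_singleton:
  assumes "greedy_reach n p t T S" and acc: "\<forall>k\<in>{1..n}. 0 \<le> p k \<and> p k \<le> 1"
  shows "\<exists>i\<in>{1..n}. S = {i} \<and> (\<forall>k\<in>{1..n}. p k \<le> p i)"
  using assms(1)
proof induction
  case (start i)
  then show ?case by blast
next
  case (step S j)
  then obtain i where "i \<in> {1..n}" "S = {i}" by blast
  moreover have j: "j \<in> {1..n}" "j \<notin> S" using step.hyps(2) by (auto simp: candidates_def)
  ultimately have "mv_acc p (insert j S) = p j * mv_acc p S"
    by (auto simp: mv_acc_doubleton mv_acc_singleton)
  also have "\<dots> \<le> mv_acc p S"
    using acc \<open>i \<in> {1..n}\<close> j \<open>S = {i}\<close>
    by (simp add: mv_acc_singleton mult_left_le_one_le)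
  finally show ?case using step.hyps(4) by simp
qed

lemma greedy_output_iff:
  assumes acc: "\<forall>k\<in>{1..n}. 0 \<le> p k \<and> p k \<le> 1"
  shows "greedy_output n p t T S \<longleftrightarrow> (\<exists>i\<in>{1..n}. S = {i} \<and> (\<forall>k\<in>{1..n}. p k \<le> p i))"
proof
  assume "greedy_output n p t T S"
  then show "\<exists>i\<in>{1..n}. S = {i} \<and> (\<forall>k\<in>{1..n}. p k \<le> p i)"
    using greedy_reach_singleton acc by (auto simp: greedy_output_def)
next
  assume "\<exists>i\<in>{1..n}. S = {i} \<and> (\<forall>k\<in>{1..n}. p k \<le> p i)"
  then obtain i where i: "i \<in> {1..n}" "S = {i}" "\<forall>k\<in>{1..n}. p k \<le> p i" by blast
  have "mv_acc p (insert j S) \<le> mv_acc p S" if "j \<in> candidates n t T S" for j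
    using that acc i by (auto simp: candidates_def mv_acc_doubleton mv_acc_singleton
        mult_left_le_one_le)
  then show "greedy_output n p t T S"
    using i by (auto simp: greedy_output_def intro: greedy_reach.start)
qed

theorem proposition1:
  shows "\<forall>\<delta>::real. \<delta> > 0 \<longrightarrow>
    (\<exists>(n::nat) (p::nat \<Rightarrow> real) (t::nat \<Rightarrow> real) (T::real).
       n \<ge> 1 \<and> (\<forall>i\<in>{1..n}. 0 \<le> p i \<and> p i \<le> 1 \<and> t i > 0) \<and> T > 0 \<and>
       (\<exists>S. greedy_output n p t T S) \<and>
       (\<forall>S. greedy_output n p t T S \<longrightarrow> mv_acc p S \<le> 1/2 + \<delta>) \<and>
       (\<exists>L. L \<subseteq> {1..n} \<and> L \<noteq> {} \<and> sum t L \<le> T \<and> mv_acc p L \<ge> 1 - \<delta>))"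
proof (intro allI impI)
  fix \<delta> :: real
  assume "\<delta> > 0"
  define P :: real where "P = 1/2 + min \<delta> (1/4)"
  have P: "1/2 < P" "P \<le> 1" "P \<le> 1/2 + \<delta>" using \<open>\<delta> > 0\<close> by (auto simp: P_def)
  then obtain r where r: "2 * (4 * P * (1 - P))^r < \<delta>"
    using ex_majority_error_bound_less \<open>\<delta> > 0\<close> by blast
  define n where "n = 2*r + 1"
  then have n_pos: "n \<ge> 1" by simp
  let ?p = "\<lambda>_::nat. P"
  have acc: "\<forall>k\<in>{1..n}. 0 \<le> ?p k \<and> ?p k \<le> 1" using P by simp
  have greedy_start: "greedy_output n ?p t T {1}" for t T
    using greedy_output_iff[OF acc] n_pos by simp
  have greedy_acc: "mv_acc ?p S = P" if "greedy_output n ?p t T S" for t T S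
    using that greedy_output_iff[OF acc] by (auto simp: mv_acc_singleton)
  have majority: "1 - \<delta> \<le> mv_acc ?p {1..n}"
    using mv_acc_homogeneous_ge[of "{1..n}" r ?p P] P r by (simp add: n_def)
  show "\<exists>n p t T. n \<ge> 1 \<and> (\<forall>i\<in>{1..n}. 0 \<le> p i \<and> p i \<le> 1 \<and> t i > 0) \<and> T > 0 \<and>
       (\<exists>S. greedy_output n p t T S) \<and>
       (\<forall>S. greedy_output n p t T S \<longrightarrow> mv_acc p S \<le> 1/2 + \<delta>) \<and>
       (\<exists>L. L \<subseteq> {1..n} \<and> L \<noteq> {} \<and> sum t L \<le> T \<and> mv_acc p L \<ge> 1 - \<delta>)"
    by (rule exI[of _ n], rule exI[of _ ?p], rule exI[of _ "\<lambda>_. 1"], rule exI[of _ "real n"])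
      (use P n_pos greedy_start greedy_acc majority in auto)
qed

end
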